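(* Let $n\ge2$, $\rho^*\ge0$, $k_\rho,k_z,k_\phi,k_\omega>0$, and nonnegative constants $\xi_1,\dots,\xi_n$ with average $\bar\xi=\frac1n\sum_{i=1}^n\xi_i$. Consider the closed-loop system, for $i=1,\dots,n$, $$\dot\rho_i=k_\rho(\rho^*-\rho_i),\quad \dot\omega_i=k_\omega(\bar\phi_i-\phi_i),\ \omega_i(t_0)=0,\quad \dot\phi_i=\omega_i+k_\phi(\bar\phi_i-\phi_i)+\xi_i,\quad \dot z_i=-k_zz_i,$$ with $\bar\phi_i$ as defined in the context. Then for every initial condition of $(\rho_i,\phi_i,z_i)$ (and $\omega_i(t_0)=0$), as $t\to\infty$, exponentially: $\rho_i\to\rho^*$, $\phi_i-\bar\phi_i\to0$, $\dot\phi_i\to\bar\xi$, and $z_i\to0$, for all $i$.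
   Context: There are $n$ robots with cylindrical coordinates $(\rho_i,\phi_i,z_i)$ relative to a target frame (radius, phase, height), whose dynamics after a feedback transformation are $\dot\rho_i,\dot\phi_i,\dot z_i$ equal to free inputs; $\omega_i$ is an internal controller state. The phases $\phi_i(t)$ are real-valued (not reduced modulo $2\pi$), robots indexed in counterclockwise phase order at the initial time. Phase averages: $\bar\phi_1=\frac{\phi_2+\phi_n-2\pi}{2}$, $\bar\phi_i=\frac{\phi_{i+1}+\phi_{i-1}}{2}$ for $2\le i\le n-1$, $\bar\phi_n=\frac{\phi_1+2\pi+\phi_{n-1}}{2}$. *)

theory Defs
  imports "HOL-Analysis.Analysis"
begin

text \<open>Phase averages. Robots are indexed 1..n; phi i is the (real-valued, not
reduced mod 2 pi) phase of robot i at a fixed time.\<close>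
definition phibar :: "nat \<Rightarrow> (nat \<Rightarrow> real) \<Rightarrow> nat \<Rightarrow> real" where
  "phibar n phi i =
     (if i = 1 then (phi 2 + phi n - 2 * pi) / 2
      else if i = n then (phi 1 + 2 * pi + phi (n - 1)) / 2
      else (phi (i + 1) + phi (i - 1)) / 2)"

end

theory Submission
  imports Defs
begin

text \<open>
  In error coordinates the closed loop is linear. Let D_i be the deviation of the gap between
  robot i and its successor from the equilibrium gap 2 pi / n, E_i = phibar_i - phi_i and
  S_i = omega_i + xi_i - mean xi. On the ring the D_i sum to zero, E_i = (D_i - D_(i-1)) / 2, and the
  S_i sum to zero for all time because the E_i do. With a small eps > 0 the function
  V = sum S_i^2 + k_omega / 2 * sum D_i^2 + eps * sum S_i E_i is comparable to
  sum S_i^2 + sum E_i^2 (by a discrete Poincare inequality) and satisfies V' <= - alpha * V, so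
  E_i and the phase velocity error S_i + k_phi * E_i decay exponentially. The radius and the
  height obey scalar linear equations.
\<close>

section \<open>Scalar differential inequalities on a half-line\<close>

lemma deriv_nonpos_imp_antimono_within:
  fixes f f' :: "real \<Rightarrow> real"
  assumes d: "\<And>t. t \<ge> t0 \<Longrightarrow> (f has_real_derivative f' t) (at t within {t0..})"
    and nonpos: "\<And>t. t \<ge> t0 \<Longrightarrow> f' t \<le> 0"
    and ab: "t0 \<le> a" "a \<le> b"
  shows "f b \<le> f a"
proof (rule DERIV_nonpos_imp_decreasing_open[OF ab(2)])
  fix x assume x: "a < x" "x < b"
  have "at x within {t0..} = at x"
    using x ab by (intro at_within_interior) auto
  then show "\<exists>y. (f has_real_derivative y) (at x) \<and> y \<le> 0"
    using d[of x] nonpos[of x] x ab by auto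
next
  have "continuous_on {t0..} f"
    using d by (meson DERIV_continuous atLeast_iff continuous_on_eq_continuous_within)
  then show "continuous_on {a..b} f"
    by (rule continuous_on_subset) (use ab in auto)
qed

lemma deriv_le_imp_exp_decay:
  fixes g g' :: "real \<Rightarrow> real"
  assumes d: "\<And>t. t \<ge> t0 \<Longrightarrow> (g has_real_derivative g' t) (at t within {t0..})"
    and le: "\<And>t. t \<ge> t0 \<Longrightarrow> g' t \<le> - a * g t"
    and t: "t \<ge> t0"
  shows "g t \<le> g t0 * exp (- a * (t - t0))"
proof -
  define h where "h s = g s * exp (a * (s - t0))" for s
  have "(h has_real_derivative (g' s + a * g s) * exp (a * (s - t0))) (at s within {t0..})"
    if "s \<ge> t0" for s
    unfolding h_def using d[OF that]
    by (auto intro!: derivative_eq_intros simp: algebra_simps)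
  moreover have "(g' s + a * g s) * exp (a * (s - t0)) \<le> 0" if "s \<ge> t0" for s
    using le[OF that] by (simp add: mult_nonpos_nonneg)
  ultimately have "h t \<le> h t0"
    by (rule deriv_nonpos_imp_antimono_within) (use t in auto)
  then have "g t * exp (a * (t - t0)) * exp (- a * (t - t0)) \<le> g t0 * exp (- a * (t - t0))"
    by (simp add: h_def)
  then show ?thesis
    by (simp add: mult.assoc flip: exp_add)
qed

lemma linear_ode_solution_within:
  fixes g :: "real \<Rightarrow> real"
  assumes d: "\<And>t. t \<ge> t0 \<Longrightarrow> (g has_real_derivative - k * g t) (at t within {t0..})"
    and t: "t \<ge> t0"
  shows "g t = g t0 * exp (- k * (t - t0))"
proof -
  have deriv: "((\<lambda>s. g s * exp (k * (s - t0))) has_real_derivative 0) (at s within {t0..})"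
    if "s \<in> {t0..}" for s
    using d[of s] that by (auto intro!: derivative_eq_intros simp: algebra_simps)
  obtain c where "\<forall>s\<in>{t0..}. g s * exp (k * (s - t0)) = c"
    using has_field_derivative_zero_constant[OF convex_real_interval(1) deriv] by blast
  then have "g t * exp (k * (t - t0)) = g t0"
    using t by force
  then show ?thesis
    by (metis exp_minus_inverse mult.assoc mult.right_neutral mult_minus_left)
qed

lemma at_within_atLeast_nontrivial:
  fixes t t0 :: real
  assumes "t \<ge> t0"
  shows "at t within {t0..} \<noteq> bot"
proof -
  have "t islimpt {t0..t+1}"
    using assms by simp
  then have "t islimpt {t0..}"
    by (rule islimpt_subset) auto
  then show ?thesis
    using trivial_limit_within by blast
qed

lemma abs_le_of_sq_le_exp:
  fixes x M a s :: real
  assumes "x\<^sup>2 \<le> M * exp (- a * s)"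
  shows "\<bar>x\<bar> \<le> sqrt M * exp (- (a / 2) * s)"
proof -
  have "sqrt (exp (- a * s)) = exp (- (a / 2) * s)"
    by (rule real_sqrt_unique) (simp_all flip: exp_add add: power2_eq_square)
  then show ?thesis
    using real_sqrt_le_mono[OF assms] by (simp add: real_sqrt_mult)
qed

lemma exp_bound_weaken:
  fixes x a c k lam t t0 :: real
  assumes "x \<le> a * exp (- k * (t - t0))" "0 \<le> a" "a \<le> c" "lam \<le> k" "t0 \<le> t"
  shows "x \<le> c * exp (- lam * (t - t0))"
proof -
  have "exp (- k * (t - t0)) \<le> exp (- lam * (t - t0))"
    using assms by (simp add: mult_right_mono)
  with assms have "a * exp (- k * (t - t0)) \<le> c * exp (- lam * (t - t0))"
    by (intro mult_mono) auto
  with assms(1) show ?thesis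
    by linarith
qed

lemma relaxation_ode_solution_within:
  fixes f :: "real \<Rightarrow> real"
  assumes d: "\<And>t. t \<ge> t0 \<Longrightarrow> (f has_real_derivative k * (a - f t)) (at t within {t0..})"
    and t: "t \<ge> t0"
  shows "f t - a = (f t0 - a) * exp (- k * (t - t0))"
proof (rule linear_ode_solution_within[where g = "\<lambda>t. f t - a", OF _ t])
  fix s assume "t0 \<le> s"
  show "((\<lambda>t. f t - a) has_real_derivative - k * (f s - a)) (at s within {t0..})"
    using DERIV_diff[OF d[OF \<open>t0 \<le> s\<close>] DERIV_const[of a]] by (simp add: algebra_simps)
qed

lemma relaxation_family_bound:
  fixes f :: "nat \<Rightarrow> real \<Rightarrow> real"
  assumes d: "\<forall>i\<in>I. \<forall>t\<ge>t0. (f i has_real_derivative k * (a - f i t)) (at t within {t0..})"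
    and I: "finite I" "i \<in> I" and t: "t \<ge> t0"
  shows "\<bar>f i t - a\<bar> \<le> (\<Sum>j\<in>I. \<bar>f j t0 - a\<bar>) * exp (- k * (t - t0))"
proof -
  have "f i t - a = (f i t0 - a) * exp (- k * (t - t0))"
    by (rule relaxation_ode_solution_within[of t0 "f i", OF _ t]) (use d I in blast)
  moreover have "\<bar>f i t0 - a\<bar> \<le> (\<Sum>j\<in>I. \<bar>f j t0 - a\<bar>)"
    using I by (intro member_le_sum) auto
  ultimately show ?thesis
    by (simp add: abs_mult mult_right_mono)
qed

lemma frac_mult_le:
  fixes m c K :: real
  assumes "0 \<le> m" "0 \<le> c" "c \<le> K"
  shows "m / K * c \<le> m"
proof (cases "K = 0")
  case False
  with assms have "c / K \<le> 1" by simp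
  with assms have "m * (c / K) \<le> m * 1" by (intro mult_left_mono) auto
  then show ?thesis by simp
qed (use assms in simp)

section \<open>Calculus on a ring of n nodes\<close>

definition ring_succ :: "nat \<Rightarrow> nat \<Rightarrow> nat" where
  "ring_succ n i = (if i = n then 1 else i + 1)"

definition ring_pred :: "nat \<Rightarrow> nat \<Rightarrow> nat" where
  "ring_pred n i = (if i = 1 then n else i - 1)"

definition ring_diff :: "nat \<Rightarrow> (nat \<Rightarrow> 'a::ab_group_add) \<Rightarrow> nat \<Rightarrow> 'a" where
  "ring_diff n x i = x (ring_succ n i) - x i"

definition ring_laplacian :: "nat \<Rightarrow> (nat \<Rightarrow> 'a::field) \<Rightarrow> nat \<Rightarrow> 'a" where
  "ring_laplacian n x i = (x (ring_succ n i) + x (ring_pred n i)) / 2 - x i"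

definition ring_sumsq :: "nat \<Rightarrow> (nat \<Rightarrow> real) \<Rightarrow> real" where
  "ring_sumsq n x = (\<Sum>i=1..n. (x i)\<^sup>2)"

definition ring_inner :: "nat \<Rightarrow> (nat \<Rightarrow> real) \<Rightarrow> (nat \<Rightarrow> real) \<Rightarrow> real" where
  "ring_inner n x y = (\<Sum>i=1..n. x i * y i)"

lemma ring_sumsq_nonneg: "ring_sumsq n x \<ge> 0"
  by (simp add: ring_sumsq_def sum_nonneg)

lemma sq_le_ring_sumsq: "i \<in> {1..n} \<Longrightarrow> (x i)\<^sup>2 \<le> ring_sumsq n x"
  unfolding ring_sumsq_def by (rule member_le_sum) auto

lemma ring_succ_mem: "n \<ge> 1 \<Longrightarrow> i \<in> {1..n} \<Longrightarrow> ring_succ n i \<in> {1..n}"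
  by (auto simp: ring_succ_def)

lemma ring_pred_mem: "n \<ge> 1 \<Longrightarrow> i \<in> {1..n} \<Longrightarrow> ring_pred n i \<in> {1..n}"
  by (auto simp: ring_pred_def)

lemma ring_succ_pred: "i \<in> {1..n} \<Longrightarrow> ring_succ n (ring_pred n i) = i"
  by (auto simp: ring_succ_def ring_pred_def)

lemma ring_pred_succ: "i \<in> {1..n} \<Longrightarrow> ring_pred n (ring_succ n i) = i"
  by (auto simp: ring_succ_def ring_pred_def)

lemma sum_ring_succ: "n \<ge> 1 \<Longrightarrow> (\<Sum>i=1..n. f (ring_succ n i)) = (\<Sum>i=1..n. f i)"
  by (rule sum.reindex_bij_witness[where i="ring_pred n" and j="ring_succ n"])
     (auto simp: ring_succ_def ring_pred_def)

lemma sum_ring_pred: "n \<ge> 1 \<Longrightarrow> (\<Sum>i=1..n. f (ring_pred n i)) = (\<Sum>i=1..n. f i)"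
  by (rule sum.reindex_bij_witness[where i="ring_succ n" and j="ring_pred n"])
     (auto simp: ring_succ_def ring_pred_def)

lemma sum_by_parts_ring:
  fixes D a :: "nat \<Rightarrow> 'a::comm_ring"
  assumes "n \<ge> 1"
  shows "(\<Sum>i=1..n. D i * ring_diff n a i) = (\<Sum>i=1..n. (D (ring_pred n i) - D i) * a i)"
proof -
  have "(\<Sum>i=1..n. D i * a (ring_succ n i)) = (\<Sum>i=1..n. D (ring_pred n i) * a i)"
    using sum_ring_pred[OF assms, of "\<lambda>i. D i * a (ring_succ n i)"]
    by (simp add: ring_succ_pred)
  then show ?thesis
    by (simp add: ring_diff_def right_diff_distrib left_diff_distrib sum_subtractf)
qed

lemma sum_mult_ring_laplacian:
  fixes S a :: "nat \<Rightarrow> 'a::field_char_0"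
  assumes n: "n \<ge> 1"
  shows "(\<Sum>i=1..n. S i * ring_laplacian n a i)
       = - (\<Sum>i=1..n. ring_diff n S i * ring_diff n a i) / 2"
proof -
  have backward: "(\<Sum>i=1..n. S i * (a (ring_pred n i) - a i))
      = - (\<Sum>i=1..n. S (ring_succ n i) * ring_diff n a i)"
    using sum_ring_succ[OF n, of "\<lambda>i. S i * (a (ring_pred n i) - a i)"]
    by (simp add: ring_pred_succ ring_diff_def sum_negf[symmetric] algebra_simps)
  have "(\<Sum>i=1..n. S i * ring_laplacian n a i)
      = ((\<Sum>i=1..n. S i * ring_diff n a i) + (\<Sum>i=1..n. S i * (a (ring_pred n i) - a i))) / 2"
    unfolding sum.distrib[symmetric] sum_divide_distrib
    by (rule sum.cong) (simp_all add: ring_laplacian_def ring_diff_def field_simps)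
  also have "\<dots> = - (\<Sum>i=1..n. ring_diff n S i * ring_diff n a i) / 2"
    unfolding backward by (simp add: ring_diff_def left_diff_distrib sum_subtractf)
  finally show ?thesis .
qed

lemma sumsq_ring_diff_le: "n \<ge> 1 \<Longrightarrow> ring_sumsq n (ring_diff n x) \<le> 4 * ring_sumsq n x"
proof -
  assume n: "n \<ge> 1"
  have "ring_sumsq n (ring_diff n x) \<le> (\<Sum>i=1..n. 2 * (x (ring_succ n i))\<^sup>2 + 2 * (x i)\<^sup>2)"
    unfolding ring_sumsq_def ring_diff_def
  proof (rule sum_mono)
    fix i
    have "0 \<le> (x (ring_succ n i) + x i)\<^sup>2" by simp
    then show "(x (ring_succ n i) - x i)\<^sup>2 \<le> 2 * (x (ring_succ n i))\<^sup>2 + 2 * (x i)\<^sup>2"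
      by (simp add: power2_eq_square algebra_simps)
  qed
  also have "\<dots> = 4 * ring_sumsq n x"
    using sum_ring_succ[OF n, of "\<lambda>i. (x i)\<^sup>2"]
    by (simp add: ring_sumsq_def sum.distrib sum_distrib_left[symmetric])
  finally show ?thesis .
qed

lemma abs_diff_le_sum_abs_steps:
  fixes x :: "nat \<Rightarrow> real"
  assumes "i \<le> j"
  shows "\<bar>x j - x i\<bar> \<le> (\<Sum>k\<in>{i..<j}. \<bar>x (k + 1) - x k\<bar>)"
  using assms
proof (induction j rule: dec_induct)
  case (step j)
  have "\<bar>x (Suc j) - x i\<bar> \<le> \<bar>x j - x i\<bar> + \<bar>x (j + 1) - x j\<bar>" by simp
  with step show ?case by simp
qed simp

lemma abs_diff_le_ring_variation:
  fixes x :: "nat \<Rightarrow> real"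
  assumes "i \<in> {1..n}" "j \<in> {1..n}"
  shows "\<bar>x j - x i\<bar> \<le> (\<Sum>k=1..n. \<bar>ring_diff n x k\<bar>)"
proof -
  have ordered: "\<bar>x b - x a\<bar> \<le> (\<Sum>k=1..n. \<bar>ring_diff n x k\<bar>)"
    if "a \<le> b" "a \<in> {1..n}" "b \<in> {1..n}" for a b
  proof -
    have "\<bar>x b - x a\<bar> \<le> (\<Sum>k\<in>{a..<b}. \<bar>x (k + 1) - x k\<bar>)"
      using abs_diff_le_sum_abs_steps[OF that(1)] .
    also have "\<dots> = (\<Sum>k\<in>{a..<b}. \<bar>ring_diff n x k\<bar>)"
      by (rule sum.cong) (use that in \<open>auto simp: ring_diff_def ring_succ_def\<close>)
    also have "\<dots> \<le> (\<Sum>k=1..n. \<bar>ring_diff n x k\<bar>)"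
      by (rule sum_mono2) (use that in auto)
    finally show ?thesis .
  qed
  show ?thesis
    using ordered[of i j] ordered[of j i] assms by (cases "i \<le> j") (auto simp: abs_minus_commute)
qed

text \<open>Discrete Poincar\'e inequality: every entry of a mean-zero vector lies within the total
  variation of the others.\<close>

lemma ring_poincare:
  fixes x :: "nat \<Rightarrow> real"
  assumes n: "n \<ge> 1" and mean_zero: "(\<Sum>i=1..n. x i) = 0"
  shows "ring_sumsq n x \<le> (real n)\<^sup>2 * ring_sumsq n (ring_diff n x)"
proof -
  define T where "T = (\<Sum>k=1..n. \<bar>ring_diff n x k\<bar>)"
  have entry_le: "\<bar>x i\<bar> \<le> T" if i: "i \<in> {1..n}" for i
  proof -
    have "real n * \<bar>x i\<bar> = \<bar>\<Sum>j=1..n. x i - x j\<bar>"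
      using mean_zero by (simp add: sum_subtractf abs_mult)
    also have "\<dots> \<le> (\<Sum>j=1..n. \<bar>x i - x j\<bar>)"
      by (rule sum_abs)
    also have "\<dots> \<le> real n * T"
      using sum_mono[of "{1..n}" "\<lambda>j. \<bar>x i - x j\<bar>" "\<lambda>_. T"]
        abs_diff_le_ring_variation[OF _ i, of _ x]
      by (simp add: T_def abs_minus_commute)
    finally show ?thesis
      using n by simp
  qed
  have variation_sq: "T\<^sup>2 \<le> real n * ring_sumsq n (ring_diff n x)"
    using sum_squared_le_sum_of_squares[of "\<lambda>k. \<bar>ring_diff n x k\<bar>" "{1..n}"]
    by (simp add: T_def ring_sumsq_def mult.commute)
  have "(x i)\<^sup>2 \<le> T\<^sup>2" if "i \<in> {1..n}" for i
    using power_mono[OF entry_le[OF that], of 2] by simp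
  then have "ring_sumsq n x \<le> real n * T\<^sup>2"
    using sum_mono[of "{1..n}" "\<lambda>i. (x i)\<^sup>2" "\<lambda>_. T\<^sup>2"] by (simp add: ring_sumsq_def)
  also have "\<dots> \<le> real n * (real n * ring_sumsq n (ring_diff n x))"
    by (rule mult_left_mono[OF variation_sq]) simp
  finally show ?thesis
    by (simp add: power2_eq_square mult.assoc)
qed

lemma abs_ring_inner_le: "\<bar>ring_inner n x y\<bar> \<le> (ring_sumsq n x + ring_sumsq n y) / 2"
proof -
  have "\<bar>ring_inner n x y\<bar> \<le> (\<Sum>i=1..n. \<bar>x i * y i\<bar>)"
    unfolding ring_inner_def by (rule sum_abs)
  also have "\<dots> \<le> (\<Sum>i=1..n. ((x i)\<^sup>2 + (y i)\<^sup>2) / 2)"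
  proof (rule sum_mono)
    fix i
    have "0 \<le> (\<bar>x i\<bar> - \<bar>y i\<bar>)\<^sup>2" by simp
    then show "\<bar>x i * y i\<bar> \<le> ((x i)\<^sup>2 + (y i)\<^sup>2) / 2"
      by (simp add: power2_eq_square algebra_simps abs_mult)
  qed
  also have "\<dots> = (ring_sumsq n x + ring_sumsq n y) / 2"
    by (simp add: ring_sumsq_def add_divide_distrib sum.distrib sum_divide_distrib)
  finally show ?thesis .
qed

lemma ring_inner_diff_lower_bound:
  assumes "n \<ge> 1"
  shows "- c * ring_inner n (ring_diff n x) (ring_diff n y)
    \<le> ring_sumsq n (ring_diff n x) / 2 + 2 * c\<^sup>2 * ring_sumsq n y"
proof -
  have "- c * ring_inner n (ring_diff n x) (ring_diff n y)
      \<le> (\<Sum>i=1..n. (ring_diff n x i)\<^sup>2 / 2 + c\<^sup>2 / 2 * (ring_diff n y i)\<^sup>2)"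
    unfolding ring_inner_def sum_distrib_left
  proof (rule sum_mono)
    fix i
    have "0 \<le> (ring_diff n x i + c * ring_diff n y i)\<^sup>2" by simp
    then show "- c * (ring_diff n x i * ring_diff n y i)
        \<le> (ring_diff n x i)\<^sup>2 / 2 + c\<^sup>2 / 2 * (ring_diff n y i)\<^sup>2"
      by (simp add: power2_eq_square algebra_simps)
  qed
  also have "\<dots> = ring_sumsq n (ring_diff n x) / 2 + c\<^sup>2 / 2 * ring_sumsq n (ring_diff n y)"
    by (simp add: ring_sumsq_def sum.distrib sum_divide_distrib sum_distrib_left)
  also have "\<dots> \<le> ring_sumsq n (ring_diff n x) / 2 + c\<^sup>2 / 2 * (4 * ring_sumsq n y)"
    using sumsq_ring_diff_le[OF assms, of y] by (intro add_left_mono mult_left_mono) auto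
  finally show ?thesis
    by (simp add: algebra_simps)
qed

section \<open>The closed-loop phase dynamics\<close>

lemma phibar_ring:
  assumes "n \<ge> 2" "i \<in> {1..n}"
  shows "phibar n phi i = (phi (ring_succ n i) + phi (ring_pred n i)) / 2
      + (if i = 1 then - pi else if i = n then pi else 0)"
  using assms by (auto simp: phibar_def ring_succ_def ring_pred_def field_simps numeral_2_eq_2)

locale phase_loop =
  fixes n :: nat and t0 k_phi k_omega :: real and xi :: "nat \<Rightarrow> real"
    and phi omega :: "nat \<Rightarrow> real \<Rightarrow> real"
  assumes n2: "n \<ge> 2" and k_phi: "k_phi > 0" and k_omega: "k_omega > 0"
    and omega0: "\<forall>i\<in>{1..n}. omega i t0 = 0"
    and domega: "\<forall>i\<in>{1..n}. \<forall>t\<ge>t0.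
        (omega i has_real_derivative
           k_omega * (phibar n (\<lambda>j. phi j t) i - phi i t)) (at t within {t0..})"
    and dphi: "\<forall>i\<in>{1..n}. \<forall>t\<ge>t0.
        (phi i has_real_derivative
           omega i t + k_phi * (phibar n (\<lambda>j. phi j t) i - phi i t) + xi i) (at t within {t0..})"
begin

lemma n1: "n \<ge> 1"
  using n2 by simp

definition mean_xi :: real where
  "mean_xi = (\<Sum>j=1..n. xi j) / real n"

definition phase_err :: "real \<Rightarrow> nat \<Rightarrow> real" where
  "phase_err t i = phibar n (\<lambda>j. phi j t) i - phi i t"

text \<open>Deviation of the gap from robot i to its successor from the equilibrium gap 2 pi / n; the
  gap from robot n back to robot 1 is measured one turn further.\<close>

definition spacing_err :: "real \<Rightarrow> nat \<Rightarrow> real" where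
  "spacing_err t i = phi (ring_succ n i) t - phi i t - 2 * pi / real n
     + (if i = n then 2 * pi else 0)"

definition freq_err :: "real \<Rightarrow> nat \<Rightarrow> real" where
  "freq_err t i = omega i t + xi i - mean_xi"

definition phase_rate :: "real \<Rightarrow> nat \<Rightarrow> real" where
  "phase_rate t i = freq_err t i + mean_xi + k_phi * phase_err t i"

lemma phase_err_eq_spacing:
  "i \<in> {1..n} \<Longrightarrow> phase_err t i = (spacing_err t i - spacing_err t (ring_pred n i)) / 2"
  using n2 by (auto simp: phase_err_def spacing_err_def phibar_def ring_succ_def ring_pred_def
      field_simps numeral_2_eq_2)

lemma sum_spacing_err: "(\<Sum>i=1..n. spacing_err t i) = 0"
proof -
  have "(\<Sum>i=1..n. spacing_err t i) = (\<Sum>i=1..n. phi (ring_succ n i) t) - (\<Sum>i=1..n. phi i t)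
      - (\<Sum>i=1..n. 2 * pi / real n) + (\<Sum>i=1..n. if i = n then 2 * pi else 0)"
    by (simp add: spacing_err_def sum.distrib sum_subtractf)
  also have "(\<Sum>i=1..n. if i = n then 2 * pi else 0) = 2 * pi"
    using n1 by (simp add: sum.delta)
  also have "(\<Sum>i=1..n. 2 * pi / real n) = 2 * pi"
    using n1 by simp
  finally show ?thesis
    using sum_ring_succ[OF n1, of "\<lambda>i. phi i t"] by simp
qed

lemma sum_phase_err: "(\<Sum>i=1..n. phase_err t i) = 0"
proof -
  have "(\<Sum>i=1..n. phase_err t i) = (\<Sum>i=1..n. (spacing_err t i - spacing_err t (ring_pred n i)) / 2)"
    by (rule sum.cong) (auto simp: phase_err_eq_spacing)
  also have "\<dots> = ((\<Sum>i=1..n. spacing_err t i) - (\<Sum>i=1..n. spacing_err t (ring_pred n i))) / 2"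
    by (simp add: diff_divide_distrib sum_subtractf sum_divide_distrib)
  also have "\<dots> = 0"
    using sum_ring_pred[OF n1, of "spacing_err t"] by simp
  finally show ?thesis .
qed

lemma phi_deriv:
  "i \<in> {1..n} \<Longrightarrow> t \<ge> t0 \<Longrightarrow> (phi i has_real_derivative phase_rate t i) (at t within {t0..})"
  using dphi by (auto simp: phase_rate_def freq_err_def phase_err_def algebra_simps)

lemma phase_err_deriv:
  assumes i: "i \<in> {1..n}" and t: "t \<ge> t0"
  shows "((\<lambda>t. phase_err t i) has_real_derivative ring_laplacian n (phase_rate t) i)
    (at t within {t0..})"
proof -
  define c where "c = (if i = 1 then - pi else if i = n then pi else 0)"
  have "(\<lambda>t. phase_err t i) = (\<lambda>t. (phi (ring_succ n i) t + phi (ring_pred n i) t) / 2 + c - phi i t)"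
    by (rule ext) (simp add: phase_err_def phibar_ring[OF n2 i] c_def)
  then show ?thesis
    unfolding ring_laplacian_def
    by (simp only:) (rule DERIV_cong[OF DERIV_diff[OF DERIV_add[OF DERIV_cdivide[OF DERIV_add[OF
          phi_deriv[OF ring_succ_mem[OF n1 i] t] phi_deriv[OF ring_pred_mem[OF n1 i] t]]]
          DERIV_const] phi_deriv[OF i t]]], simp)
qed

lemma spacing_err_deriv:
  assumes i: "i \<in> {1..n}" and t: "t \<ge> t0"
  shows "((\<lambda>t. spacing_err t i) has_real_derivative ring_diff n (phase_rate t) i)
    (at t within {t0..})"
  unfolding spacing_err_def ring_diff_def
  using n1 by (auto intro!: derivative_eq_intros phi_deriv ring_succ_mem i t)

lemma freq_err_deriv:
  assumes i: "i \<in> {1..n}" and t: "t \<ge> t0"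
  shows "((\<lambda>t. freq_err t i) has_real_derivative k_omega * phase_err t i) (at t within {t0..})"
  unfolding freq_err_def
  using domega i t by (auto intro!: derivative_eq_intros simp: phase_err_def)

text \<open>The integrator states are driven by the phase errors, which sum to zero on the ring, so
  their sum keeps its initial value 0.\<close>

lemma sum_freq_err:
  assumes t: "t \<ge> t0"
  shows "(\<Sum>i=1..n. freq_err t i) = 0"
proof -
  have deriv: "((\<lambda>t. \<Sum>i=1..n. freq_err t i) has_real_derivative 0) (at s within {t0..})"
    if "s \<in> {t0..}" for s
  proof -
    have "((\<lambda>t. \<Sum>i=1..n. freq_err t i) has_real_derivative (\<Sum>i=1..n. k_omega * phase_err s i))
        (at s within {t0..})"
      by (rule DERIV_sum) (use that in \<open>auto intro: freq_err_deriv\<close>)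
    then show ?thesis
      using sum_phase_err[of s] by (simp add: sum_distrib_left[symmetric])
  qed
  obtain c where "\<forall>s\<in>{t0..}. (\<Sum>i=1..n. freq_err s i) = c"
    using has_field_derivative_zero_constant[OF convex_real_interval(1) deriv] by blast
  moreover have "(\<Sum>i=1..n. freq_err t0 i) = 0"
    using omega0 n1 by (simp add: freq_err_def sum.distrib sum_subtractf mean_xi_def)
  ultimately show ?thesis
    using t by force
qed

lemma ring_diff_phase_rate:
  "ring_diff n (phase_rate t) i = ring_diff n (freq_err t) i + k_phi * ring_diff n (phase_err t) i"
  by (simp add: ring_diff_def phase_rate_def algebra_simps)

lemma ring_diff_spacing_err:
  assumes "i \<in> {1..n}"
  shows "ring_diff n (spacing_err t) i = 2 * phase_err t (ring_succ n i)"
proof -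
  have "phase_err t (ring_succ n i) = (spacing_err t (ring_succ n i) - spacing_err t i) / 2"
    using phase_err_eq_spacing[OF ring_succ_mem[OF n1 assms]] ring_pred_succ[OF assms] by simp
  then show ?thesis
    by (simp add: ring_diff_def)
qed

lemma sumsq_phase_err_le: "ring_sumsq n (phase_err t) \<le> ring_sumsq n (spacing_err t)"
proof -
  have "ring_sumsq n (phase_err t)
      \<le> (\<Sum>i=1..n. (spacing_err t i)\<^sup>2 / 2 + (spacing_err t (ring_pred n i))\<^sup>2 / 2)"
    unfolding ring_sumsq_def
  proof (rule sum_mono)
    fix i assume i: "i \<in> {1..n}"
    have "0 \<le> (spacing_err t i + spacing_err t (ring_pred n i))\<^sup>2" by simp
    then show "(phase_err t i)\<^sup>2
        \<le> (spacing_err t i)\<^sup>2 / 2 + (spacing_err t (ring_pred n i))\<^sup>2 / 2"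
      by (simp add: phase_err_eq_spacing[OF i] power2_eq_square algebra_simps)
  qed
  also have "\<dots> = ring_sumsq n (spacing_err t)"
    using sum_ring_pred[OF n1, of "\<lambda>i. (spacing_err t i)\<^sup>2"]
    by (simp add: ring_sumsq_def sum.distrib sum_divide_distrib[symmetric])
  finally show ?thesis .
qed

lemma sumsq_spacing_err_le: "ring_sumsq n (spacing_err t) \<le> 4 * (real n)\<^sup>2 * ring_sumsq n (phase_err t)"
proof -
  have "ring_sumsq n (ring_diff n (spacing_err t)) = (\<Sum>i=1..n. (2 * phase_err t (ring_succ n i))\<^sup>2)"
    unfolding ring_sumsq_def by (rule sum.cong) (simp_all add: ring_diff_spacing_err)
  also have "\<dots> = 4 * ring_sumsq n (phase_err t)"
    using sum_ring_succ[OF n1, of "\<lambda>i. (2 * phase_err t i)\<^sup>2"]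
    by (simp add: ring_sumsq_def power_mult_distrib sum_distrib_left)
  finally show ?thesis
    using ring_poincare[OF n1 sum_spacing_err[of t]] by (simp add: mult_ac)
qed

subsection \<open>A strict Lyapunov function\<close>

definition lyap_eps :: real where
  "lyap_eps = min 1 (min (k_omega / 2) (k_omega * k_phi / (k_omega + k_phi\<^sup>2)))"

lemma lyap_eps:
  "lyap_eps > 0" "lyap_eps \<le> 1" "lyap_eps \<le> k_omega / 2"
  "lyap_eps * (k_omega + k_phi\<^sup>2) \<le> k_omega * k_phi"
proof -
  have pos: "k_omega + k_phi\<^sup>2 > 0"
    using k_omega by (simp add: add_pos_nonneg)
  show "lyap_eps > 0"
    using k_omega k_phi pos by (simp add: lyap_eps_def)
  show "lyap_eps \<le> 1" "lyap_eps \<le> k_omega / 2"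
    unfolding lyap_eps_def by linarith+
  have "lyap_eps \<le> k_omega * k_phi / (k_omega + k_phi\<^sup>2)"
    by (simp add: lyap_eps_def)
  then show "lyap_eps * (k_omega + k_phi\<^sup>2) \<le> k_omega * k_phi"
    using pos by (simp add: pos_le_divide_eq)
qed

text \<open>Without the cross term the derivative of lyap would only control the phase errors; the
  small multiple of it adds dissipation in the frequency errors. The bounds on lyap_eps keep lyap
  positive definite and let the dissipation absorb the indefinite part of the cross term.\<close>

definition lyap :: "real \<Rightarrow> real" where
  "lyap t = ring_sumsq n (freq_err t) + k_omega / 2 * ring_sumsq n (spacing_err t)
     + lyap_eps * ring_inner n (freq_err t) (phase_err t)"

lemma sumsq_freq_err_deriv:
  assumes t: "t \<ge> t0"
  shows "((\<lambda>t. ring_sumsq n (freq_err t)) has_real_derivative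
      2 * k_omega * ring_inner n (freq_err t) (phase_err t)) (at t within {t0..})"
proof -
  have "((\<lambda>t. \<Sum>i=1..n. (freq_err t i)\<^sup>2) has_real_derivative
      (\<Sum>i=1..n. 2 * k_omega * (freq_err t i * phase_err t i))) (at t within {t0..})"
    by (rule DERIV_sum, rule DERIV_cong[OF DERIV_power[OF freq_err_deriv]]) (use t in auto)
  then show ?thesis
    by (simp add: ring_sumsq_def ring_inner_def sum_distrib_left)
qed

lemma sumsq_spacing_err_deriv:
  assumes t: "t \<ge> t0"
  shows "((\<lambda>t. ring_sumsq n (spacing_err t)) has_real_derivative
      - 4 * (ring_inner n (freq_err t) (phase_err t) + k_phi * ring_sumsq n (phase_err t)))
      (at t within {t0..})"
proof -
  have "((\<lambda>t. \<Sum>i=1..n. (spacing_err t i)\<^sup>2) has_real_derivative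
      2 * (\<Sum>i=1..n. spacing_err t i * ring_diff n (phase_rate t) i)) (at t within {t0..})"
    unfolding sum_distrib_left
    by (rule DERIV_sum, rule DERIV_cong[OF DERIV_power[OF spacing_err_deriv]]) (use t in auto)
  moreover have "(\<Sum>i=1..n. spacing_err t i * ring_diff n (phase_rate t) i)
      = - 2 * (\<Sum>i=1..n. phase_err t i * phase_rate t i)"
    unfolding sum_by_parts_ring[OF n1] sum_distrib_left
    by (rule sum.cong) (simp_all add: phase_err_eq_spacing algebra_simps)
  moreover have "(\<Sum>i=1..n. phase_err t i * phase_rate t i)
      = ring_inner n (freq_err t) (phase_err t) + k_phi * ring_sumsq n (phase_err t)"
    using sum_phase_err[of t]
    by (simp add: phase_rate_def ring_inner_def ring_sumsq_def algebra_simps power2_eq_square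
        sum.distrib sum_distrib_left[symmetric] sum_distrib_right[symmetric])
  ultimately show ?thesis
    by (simp add: ring_sumsq_def)
qed

lemma cross_term_deriv:
  assumes t: "t \<ge> t0"
  shows "((\<lambda>t. ring_inner n (freq_err t) (phase_err t)) has_real_derivative
      k_omega * ring_sumsq n (phase_err t)
      - (ring_sumsq n (ring_diff n (freq_err t))
         + k_phi * ring_inner n (ring_diff n (freq_err t)) (ring_diff n (phase_err t))) / 2)
      (at t within {t0..})"
proof -
  have lap: "(\<Sum>i=1..n. freq_err t i * ring_laplacian n (phase_rate t) i)
      = - (ring_sumsq n (ring_diff n (freq_err t))
         + k_phi * ring_inner n (ring_diff n (freq_err t)) (ring_diff n (phase_err t))) / 2"
    unfolding sum_mult_ring_laplacian[OF n1] ring_diff_phase_rate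
    by (simp add: ring_sumsq_def ring_inner_def algebra_simps power2_eq_square sum.distrib
        sum_distrib_left)
  have "((\<lambda>t. ring_inner n (freq_err t) (phase_err t)) has_real_derivative
      (\<Sum>i=1..n. k_omega * (phase_err t i)\<^sup>2)
      + (\<Sum>i=1..n. freq_err t i * ring_laplacian n (phase_rate t) i)) (at t within {t0..})"
    unfolding ring_inner_def sum.distrib[symmetric]
    by (rule DERIV_sum, rule DERIV_cong[OF DERIV_mult'[OF freq_err_deriv phase_err_deriv]])
      (use t in \<open>auto simp: power2_eq_square\<close>)
  moreover have "(\<Sum>i=1..n. k_omega * (phase_err t i)\<^sup>2) = k_omega * ring_sumsq n (phase_err t)"
    by (simp add: ring_sumsq_def sum_distrib_left)
  ultimately show ?thesis
    unfolding lap by (simp only: diff_conv_add_uminus minus_divide_left)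
qed

definition lyap' :: "real \<Rightarrow> real" where
  "lyap' t = 2 * k_omega * ring_inner n (freq_err t) (phase_err t)
     + k_omega / 2 * (- 4 * (ring_inner n (freq_err t) (phase_err t) + k_phi * ring_sumsq n (phase_err t)))
     + lyap_eps * (k_omega * ring_sumsq n (phase_err t)
        - (ring_sumsq n (ring_diff n (freq_err t))
           + k_phi * ring_inner n (ring_diff n (freq_err t)) (ring_diff n (phase_err t))) / 2)"

lemma lyap_deriv:
  assumes t: "t \<ge> t0"
  shows "(lyap has_real_derivative lyap' t) (at t within {t0..})"
proof -
  have "lyap = (\<lambda>t. ring_sumsq n (freq_err t) + k_omega / 2 * ring_sumsq n (spacing_err t)
     + lyap_eps * ring_inner n (freq_err t) (phase_err t))"
    by (rule ext) (simp only: lyap_def)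
  moreover have "((\<lambda>t. ring_sumsq n (freq_err t) + k_omega / 2 * ring_sumsq n (spacing_err t)
     + lyap_eps * ring_inner n (freq_err t) (phase_err t)) has_real_derivative lyap' t)
     (at t within {t0..})"
    unfolding lyap'_def
    using DERIV_add[OF DERIV_add[OF sumsq_freq_err_deriv[OF t]
        DERIV_cmult[OF sumsq_spacing_err_deriv[OF t]]] DERIV_cmult[OF cross_term_deriv[OF t]]] .
  ultimately show ?thesis
    by (simp only:)
qed

lemma lyap_deriv_le:
  "lyap' t \<le> - (k_omega * k_phi * ring_sumsq n (phase_err t))
     - lyap_eps / 4 * ring_sumsq n (ring_diff n (freq_err t))"
proof -
  have "lyap_eps * (- k_phi * ring_inner n (ring_diff n (freq_err t)) (ring_diff n (phase_err t)))
      \<le> lyap_eps * (ring_sumsq n (ring_diff n (freq_err t)) / 2 + 2 * k_phi\<^sup>2 * ring_sumsq n (phase_err t))"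
    using ring_inner_diff_lower_bound[OF n1] lyap_eps(1) by (intro mult_left_mono) auto
  moreover have "lyap_eps * (k_omega + k_phi\<^sup>2) * ring_sumsq n (phase_err t)
      \<le> k_omega * k_phi * ring_sumsq n (phase_err t)"
    using mult_right_mono[OF lyap_eps(4) ring_sumsq_nonneg] .
  ultimately show ?thesis
    unfolding lyap'_def by argo
qed

lemma lyap_lower:
  "ring_sumsq n (freq_err t) / 2 + k_omega / 4 * ring_sumsq n (phase_err t) \<le> lyap t"
proof -
  have "- ((ring_sumsq n (freq_err t) + ring_sumsq n (phase_err t)) / 2)
      \<le> ring_inner n (freq_err t) (phase_err t)"
    using abs_ring_inner_le[of n "freq_err t" "phase_err t"] by linarith
  then have "lyap_eps * (- ((ring_sumsq n (freq_err t) + ring_sumsq n (phase_err t)) / 2))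
      \<le> lyap_eps * ring_inner n (freq_err t) (phase_err t)"
    using lyap_eps(1) by (intro mult_left_mono) auto
  moreover have "lyap_eps * ring_sumsq n (freq_err t) \<le> ring_sumsq n (freq_err t)"
    using mult_left_le_one_le[OF ring_sumsq_nonneg less_imp_le[OF lyap_eps(1)] lyap_eps(2)] .
  moreover have "lyap_eps * ring_sumsq n (phase_err t) \<le> k_omega / 2 * ring_sumsq n (phase_err t)"
    using lyap_eps(3) ring_sumsq_nonneg by (rule mult_right_mono)
  moreover have "k_omega / 2 * ring_sumsq n (phase_err t) \<le> k_omega / 2 * ring_sumsq n (spacing_err t)"
    using sumsq_phase_err_le k_omega by simp
  ultimately show ?thesis
    unfolding lyap_def by argo
qed

lemma lyap_upper:
  assumes t: "t \<ge> t0"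
  shows "lyap t \<le> 3 / 2 * (real n)\<^sup>2 * ring_sumsq n (ring_diff n (freq_err t))
    + (2 * k_omega * (real n)\<^sup>2 + 1 / 2) * ring_sumsq n (phase_err t)"
proof -
  have "lyap_eps * ring_inner n (freq_err t) (phase_err t) \<le> \<bar>lyap_eps * ring_inner n (freq_err t) (phase_err t)\<bar>"
    by simp
  also have "\<dots> \<le> \<bar>ring_inner n (freq_err t) (phase_err t)\<bar>"
    using lyap_eps(1,2) by (simp add: abs_mult mult_left_le_one_le)
  finally have cross: "lyap_eps * ring_inner n (freq_err t) (phase_err t)
      \<le> (ring_sumsq n (freq_err t) + ring_sumsq n (phase_err t)) / 2"
    using abs_ring_inner_le by (rule order_trans)
  have spacing: "k_omega / 2 * ring_sumsq n (spacing_err t)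
      \<le> k_omega / 2 * (4 * (real n)\<^sup>2 * ring_sumsq n (phase_err t))"
    using sumsq_spacing_err_le[of t] k_omega by (intro mult_left_mono) auto
  have "lyap t \<le> ring_sumsq n (freq_err t) + k_omega / 2 * (4 * (real n)\<^sup>2 * ring_sumsq n (phase_err t))
      + (ring_sumsq n (freq_err t) + ring_sumsq n (phase_err t)) / 2"
    unfolding lyap_def by (rule add_mono[OF add_mono[OF order_refl spacing] cross])
  also have "\<dots> = 3 / 2 * ring_sumsq n (freq_err t)
      + (2 * k_omega * (real n)\<^sup>2 + 1 / 2) * ring_sumsq n (phase_err t)"
    by (simp add: field_simps)
  also have "\<dots> \<le> 3 / 2 * ((real n)\<^sup>2 * ring_sumsq n (ring_diff n (freq_err t)))
      + (2 * k_omega * (real n)\<^sup>2 + 1 / 2) * ring_sumsq n (phase_err t)"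
    using ring_poincare[OF n1 sum_freq_err[OF t]] by simp
  finally show ?thesis
    by (simp add: mult.assoc)
qed

definition decay_rate :: real where
  "decay_rate = min (lyap_eps / 4) (k_omega * k_phi) / (2 * (real n)\<^sup>2 * (1 + k_omega) + 1)"

lemma decay_rate_pos: "decay_rate > 0"
proof -
  have "0 \<le> 2 * (real n)\<^sup>2 * (1 + k_omega)"
    using k_omega by simp
  then have "2 * (real n)\<^sup>2 * (1 + k_omega) + 1 > 0"
    by linarith
  then show ?thesis
    using lyap_eps(1) k_omega k_phi by (simp add: decay_rate_def)
qed


lemma decay_rate_coeffs:
  "decay_rate * (3 / 2 * (real n)\<^sup>2) \<le> lyap_eps / 4"
  "decay_rate * (2 * k_omega * (real n)\<^sup>2 + 1 / 2) \<le> k_omega * k_phi"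
proof -
  define K where "K = 2 * (real n)\<^sup>2 * (1 + k_omega) + 1"
  define m where "m = min (lyap_eps / 4) (k_omega * k_phi)"
  have m: "0 \<le> m" "m \<le> lyap_eps / 4" "m \<le> k_omega * k_phi"
    using lyap_eps(1) k_omega k_phi by (auto simp: m_def)
  have rate: "decay_rate = m / K"
    by (simp add: decay_rate_def m_def K_def)
  have "0 \<le> (real n)\<^sup>2 * k_omega" "0 \<le> (real n)\<^sup>2"
    using k_omega by simp_all
  then have K: "3 / 2 * (real n)\<^sup>2 \<le> K" "2 * k_omega * (real n)\<^sup>2 + 1 / 2 \<le> K"
    unfolding K_def by (simp_all add: algebra_simps)
  have "decay_rate * (3 / 2 * (real n)\<^sup>2) \<le> m"
    unfolding rate by (rule frac_mult_le[OF m(1) _ K(1)]) simp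
  moreover have "decay_rate * (2 * k_omega * (real n)\<^sup>2 + 1 / 2) \<le> m"
    unfolding rate by (rule frac_mult_le[OF m(1) _ K(2)]) (use k_omega in simp)
  ultimately show "decay_rate * (3 / 2 * (real n)\<^sup>2) \<le> lyap_eps / 4"
    and "decay_rate * (2 * k_omega * (real n)\<^sup>2 + 1 / 2) \<le> k_omega * k_phi"
    using m by linarith+
qed

lemma lyap_deriv_le_decay:
  assumes t: "t \<ge> t0"
  shows "lyap' t \<le> - decay_rate * lyap t"
proof -
  have "decay_rate * lyap t \<le> decay_rate * (3 / 2 * (real n)\<^sup>2 * ring_sumsq n (ring_diff n (freq_err t))
    + (2 * k_omega * (real n)\<^sup>2 + 1 / 2) * ring_sumsq n (phase_err t))"
    using lyap_upper[OF t] decay_rate_pos by (intro mult_left_mono) auto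
  also have "\<dots> = decay_rate * (3 / 2 * (real n)\<^sup>2) * ring_sumsq n (ring_diff n (freq_err t))
      + decay_rate * (2 * k_omega * (real n)\<^sup>2 + 1 / 2) * ring_sumsq n (phase_err t)"
    by (simp add: algebra_simps)
  also have "\<dots> \<le> lyap_eps / 4 * ring_sumsq n (ring_diff n (freq_err t))
      + k_omega * k_phi * ring_sumsq n (phase_err t)"
    using decay_rate_coeffs ring_sumsq_nonneg by (intro add_mono mult_right_mono) auto
  finally show ?thesis
    using lyap_deriv_le[of t] by linarith
qed

lemma lyap_decay: "t \<ge> t0 \<Longrightarrow> lyap t \<le> lyap t0 * exp (- decay_rate * (t - t0))"
  by (rule deriv_le_imp_exp_decay[OF lyap_deriv lyap_deriv_le_decay])

lemma lyap_nonneg: "lyap t \<ge> 0"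
proof -
  have "0 \<le> k_omega / 4 * ring_sumsq n (phase_err t)"
    using k_omega ring_sumsq_nonneg by simp
  then show ?thesis
    using lyap_lower[of t] ring_sumsq_nonneg[of n "freq_err t"] by linarith
qed

lemma errors_sq_le_lyap:
  assumes i: "i \<in> {1..n}"
  shows "(freq_err t i)\<^sup>2 \<le> (2 + 4 / k_omega) * lyap t"
    and "(phase_err t i)\<^sup>2 \<le> (2 + 4 / k_omega) * lyap t"
proof -
  have weighted: "0 \<le> k_omega / 4 * ring_sumsq n (phase_err t)"
    using k_omega ring_sumsq_nonneg by simp
  have extra: "0 \<le> 4 / k_omega * lyap t" "0 \<le> 2 * lyap t"
    using k_omega lyap_nonneg by simp_all
  have "(freq_err t i)\<^sup>2 \<le> 2 * lyap t"
    using sq_le_ring_sumsq[OF i, of "freq_err t"] lyap_lower[of t] weighted by linarith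
  then show "(freq_err t i)\<^sup>2 \<le> (2 + 4 / k_omega) * lyap t"
    using extra by (simp add: distrib_right)
  have "k_omega / 4 * (phase_err t i)\<^sup>2 \<le> k_omega / 4 * ring_sumsq n (phase_err t)"
    using sq_le_ring_sumsq[OF i, of "phase_err t"] k_omega by (intro mult_left_mono) auto
  then have "k_omega / 4 * (phase_err t i)\<^sup>2 \<le> lyap t"
    using lyap_lower[of t] ring_sumsq_nonneg[of n "freq_err t"] by linarith
  then have "(phase_err t i)\<^sup>2 \<le> 4 / k_omega * lyap t"
    using k_omega by (simp add: field_simps)
  then show "(phase_err t i)\<^sup>2 \<le> (2 + 4 / k_omega) * lyap t"
    using extra by (simp add: distrib_right)
qed

lemma errors_exp_decay:
  assumes i: "i \<in> {1..n}" and t: "t \<ge> t0"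
  defines "R \<equiv> sqrt ((2 + 4 / k_omega) * lyap t0)"
  shows "\<bar>freq_err t i\<bar> \<le> R * exp (- (decay_rate / 2) * (t - t0))"
    and "\<bar>phase_err t i\<bar> \<le> R * exp (- (decay_rate / 2) * (t - t0))"
proof -
  have "(2 + 4 / k_omega) * lyap t \<le> (2 + 4 / k_omega) * lyap t0 * exp (- decay_rate * (t - t0))"
    using mult_left_mono[OF lyap_decay[OF t], of "2 + 4 / k_omega"] k_omega by (simp add: mult.assoc)
  then have freq: "(freq_err t i)\<^sup>2 \<le> (2 + 4 / k_omega) * lyap t0 * exp (- decay_rate * (t - t0))"
    and phase: "(phase_err t i)\<^sup>2 \<le> (2 + 4 / k_omega) * lyap t0 * exp (- decay_rate * (t - t0))"
    using errors_sq_le_lyap[OF i, of t] by linarith+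
  show "\<bar>freq_err t i\<bar> \<le> R * exp (- (decay_rate / 2) * (t - t0))"
    unfolding R_def by (rule abs_le_of_sq_le_exp[OF freq])
  show "\<bar>phase_err t i\<bar> \<le> R * exp (- (decay_rate / 2) * (t - t0))"
    unfolding R_def by (rule abs_le_of_sq_le_exp[OF phase])
qed

definition err_const :: real where
  "err_const = (1 + k_phi) * sqrt ((2 + 4 / k_omega) * lyap t0)"

lemma err_const_nonneg: "err_const \<ge> 0"
  using k_omega k_phi lyap_nonneg by (simp add: err_const_def)

lemma phase_deviation_decay:
  assumes i: "i \<in> {1..n}" and t: "t \<ge> t0"
  shows "\<bar>phi i t - phibar n (\<lambda>j. phi j t) i\<bar> \<le> err_const * exp (- (decay_rate / 2) * (t - t0))"
proof -
  have "\<bar>phi i t - phibar n (\<lambda>j. phi j t) i\<bar> = \<bar>phase_err t i\<bar>"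
    by (simp add: phase_err_def abs_minus_commute)
  also have "\<dots> \<le> sqrt ((2 + 4 / k_omega) * lyap t0) * exp (- (decay_rate / 2) * (t - t0))"
    by (rule errors_exp_decay(2)[OF i t])
  also have "\<dots> \<le> err_const * exp (- (decay_rate / 2) * (t - t0))"
  proof (rule mult_right_mono)
    have "0 \<le> sqrt ((2 + 4 / k_omega) * lyap t0)"
      using k_omega lyap_nonneg by simp
    then show "sqrt ((2 + 4 / k_omega) * lyap t0) \<le> err_const"
      using k_phi by (simp add: err_const_def distrib_right)
  qed simp
  finally show ?thesis .
qed

lemma phase_rate_decay:
  assumes i: "i \<in> {1..n}" and t: "t \<ge> t0"
    and d: "(phi i has_real_derivative d) (at t within {t0..})"
  shows "\<bar>d - mean_xi\<bar> \<le> err_const * exp (- (decay_rate / 2) * (t - t0))"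
proof -
  have "d = phase_rate t i"
    using d phi_deriv[OF i t] at_within_atLeast_nontrivial[OF t] by (rule has_field_derivative_unique)
  then have "\<bar>d - mean_xi\<bar> = \<bar>freq_err t i + k_phi * phase_err t i\<bar>"
    by (simp add: phase_rate_def)
  also have "\<dots> \<le> \<bar>freq_err t i\<bar> + k_phi * \<bar>phase_err t i\<bar>"
    using abs_triangle_ineq[of "freq_err t i" "k_phi * phase_err t i"] k_phi by (simp add: abs_mult)
  also have "\<dots> \<le> err_const * exp (- (decay_rate / 2) * (t - t0))"
    using errors_exp_decay[OF i t] k_phi
    by (simp add: err_const_def algebra_simps add_mono)
  finally show ?thesis .
qed

end

theorem proposition3:
  fixes n :: nat and t0 rho_star k_rho k_z k_phi k_omega :: real
    and xi :: "nat \<Rightarrow> real"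
    and rho phi z omega :: "nat \<Rightarrow> real \<Rightarrow> real"
  assumes n2: "n \<ge> 2"
    and rho_star: "rho_star \<ge> 0"
    and gains: "k_rho > 0" "k_z > 0" "k_phi > 0" "k_omega > 0"
    and xi_nonneg: "\<forall>i\<in>{1..n}. xi i \<ge> 0"
    and omega0: "\<forall>i\<in>{1..n}. omega i t0 = 0"
    and drho: "\<forall>i\<in>{1..n}. \<forall>t\<ge>t0.
        (rho i has_real_derivative k_rho * (rho_star - rho i t)) (at t within {t0..})"
    and domega: "\<forall>i\<in>{1..n}. \<forall>t\<ge>t0.
        (omega i has_real_derivative
           k_omega * (phibar n (\<lambda>j. phi j t) i - phi i t)) (at t within {t0..})"
    and dphi: "\<forall>i\<in>{1..n}. \<forall>t\<ge>t0.
        (phi i has_real_derivative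
           omega i t + k_phi * (phibar n (\<lambda>j. phi j t) i - phi i t) + xi i) (at t within {t0..})"
    and dz: "\<forall>i\<in>{1..n}. \<forall>t\<ge>t0.
        (z i has_real_derivative - k_z * z i t) (at t within {t0..})"
  shows "\<exists>c lam. c > 0 \<and> lam > 0 \<and>
     (\<forall>i\<in>{1..n}. \<forall>t\<ge>t0.
        \<bar>rho i t - rho_star\<bar> \<le> c * exp (- lam * (t - t0)) \<and>
        \<bar>phi i t - phibar n (\<lambda>j. phi j t) i\<bar> \<le> c * exp (- lam * (t - t0)) \<and>
        (\<forall>d. (phi i has_real_derivative d) (at t within {t0..}) \<longrightarrow>
             \<bar>d - (\<Sum>j=1..n. xi j) / real n\<bar> \<le> c * exp (- lam * (t - t0))) \<and>
        \<bar>z i t\<bar> \<le> c * exp (- lam * (t - t0)))"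
proof -
  interpret phase_loop n t0 k_phi k_omega xi phi omega
    using n2 gains omega0 domega dphi by unfold_locales auto
  have dz': "\<forall>i\<in>{1..n}. \<forall>t\<ge>t0. (z i has_real_derivative k_z * (0 - z i t)) (at t within {t0..})"
    using dz by simp
  define c where "c = 1 + err_const + (\<Sum>i=1..n. \<bar>rho i t0 - rho_star\<bar>) + (\<Sum>i=1..n. \<bar>z i t0 - 0\<bar>)"
  define lam where "lam = min (decay_rate / 2) (min k_rho k_z)"
  have "0 \<le> (\<Sum>i=1..n. \<bar>rho i t0 - rho_star\<bar>)" "0 \<le> (\<Sum>i=1..n. \<bar>z i t0 - 0\<bar>)"
    by (simp_all add: sum_nonneg)
  then have c: "0 < c" "err_const \<le> c" "(\<Sum>i=1..n. \<bar>rho i t0 - rho_star\<bar>) \<le> c" "(\<Sum>i=1..n. \<bar>z i t0 - 0\<bar>) \<le> c"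
    using err_const_nonneg unfolding c_def by linarith+
  have lam: "0 < lam" "lam \<le> decay_rate / 2" "lam \<le> k_rho" "lam \<le> k_z"
    using decay_rate_pos gains by (auto simp: lam_def)
  show ?thesis
  proof (rule exI[of _ c], rule exI[of _ lam], intro conjI ballI allI impI)
    fix i t assume i: "i \<in> {1..n}" and t: "t0 \<le> t"
    show "\<bar>rho i t - rho_star\<bar> \<le> c * exp (- lam * (t - t0))"
      by (rule exp_bound_weaken[OF relaxation_family_bound[OF drho _ i t] sum_nonneg c(3) lam(3) t]) simp_all
    have "\<bar>z i t - 0\<bar> \<le> c * exp (- lam * (t - t0))"
      by (rule exp_bound_weaken[OF relaxation_family_bound[OF dz' _ i t] sum_nonneg c(4) lam(4) t]) simp_all
    then show "\<bar>z i t\<bar> \<le> c * exp (- lam * (t - t0))"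
      by simp
    show "\<bar>phi i t - phibar n (\<lambda>j. phi j t) i\<bar> \<le> c * exp (- lam * (t - t0))"
      by (rule exp_bound_weaken[OF phase_deviation_decay[OF i t] err_const_nonneg c(2) lam(2) t])
    fix d assume "(phi i has_real_derivative d) (at t within {t0..})"
    from exp_bound_weaken[OF phase_rate_decay[OF i t this] err_const_nonneg c(2) lam(2) t]
    show "\<bar>d - (\<Sum>j=1..n. xi j) / real n\<bar> \<le> c * exp (- lam * (t - t0))"
      by (simp add: mean_xi_def)
  qed (use c lam in simp_all)
qed

end
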